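(* Let $n\ge3$, $m\ge1$. Every superderivation (even or odd) $D$ of the Lie superalgebra $L^{n,m}$ is a derivation of the underlying Lie algebra of $L^{n,m}$ (i.e., of the vector space $L^{n,m}$ with the same bracket, which is antisymmetric and satisfies the ordinary Jacobi identity), namely $D([a,b])=[D(a),b]+[a,D(b)]$ for all $a,b$. In particular every odd superderivation $D$ satisfies $x_1\notin$ the support of $D(y_1)$, i.e. the $x_1$-coordinate of $D(y_1)$ is $0$.
   Context: $L^{n,m}$ has even basis $x_1,\dots,x_n$ and odd basis $y_1,\dots,y_m$, with only nonzero brackets $[x_1,x_i]=-[x_i,x_1]=x_{i+1}$ ($2\le i\le n-1$) and $[x_1,y_j]=-[y_j,x_1]=y_{j+1}$ ($1\le j\le m-1$). A superderivation of degree $s\in\mathbb{Z}_2$ of a Lie superalgebra $L$ is a linear map $D$ with $D(L_{\bar i})\subset L_{\bar i+s}$ and $D([a,b])=[D(a),b]+(-1)^{s|a|}[a,D(b)]$ for homogeneous $a,b$. *)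

theory Defs
  imports Main
begin

text \<open>Elements of L^{n,m} over a field 'k are represented by coordinate pairs (u, w):
  u i is the coefficient of x_i (1 \<le> i \<le> n), w j the coefficient of y_j (1 \<le> j \<le> m);
  coordinates outside these ranges are zero (see carrierL).\<close>

type_synonym 'k svec = "(nat \<Rightarrow> 'k) \<times> (nat \<Rightarrow> 'k)"

definition carrierL :: "nat \<Rightarrow> nat \<Rightarrow> ('k::field) svec set" where
  "carrierL n m = {a. (\<forall>i. (i < 1 \<or> n < i) \<longrightarrow> fst a i = 0) \<and>
                       (\<forall>j. (j < 1 \<or> m < j) \<longrightarrow> snd a j = 0)}"

definition addL :: "('k::field) svec \<Rightarrow> 'k svec \<Rightarrow> 'k svec" where
  "addL a b = (\<lambda>i. fst a i + fst b i, \<lambda>j. snd a j + snd b j)"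

definition smulL :: "'k::field \<Rightarrow> 'k svec \<Rightarrow> 'k svec" where
  "smulL c a = (\<lambda>i. c * fst a i, \<lambda>j. c * snd a j)"

text \<open>Bilinear extension of [x_1,x_i] = -[x_i,x_1] = x_{i+1} (2 \<le> i \<le> n-1),
  [x_1,y_j] = -[y_j,x_1] = y_{j+1} (1 \<le> j \<le> m-1), all other brackets of basis vectors 0.\<close>
definition brL :: "nat \<Rightarrow> nat \<Rightarrow> ('k::field) svec \<Rightarrow> 'k svec \<Rightarrow> 'k svec" where
  "brL n m a b =
    (\<lambda>k. if 3 \<le> k \<and> k \<le> n then fst a 1 * fst b (k - 1) - fst a (k - 1) * fst b 1 else 0,
     \<lambda>k. if 2 \<le> k \<and> k \<le> m then fst a 1 * snd b (k - 1) - snd a (k - 1) * fst b 1 else 0)"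

text \<open>Homogeneous components: parity False = even part (span of x_i), True = odd part (span of y_j).\<close>
definition homL :: "nat \<Rightarrow> nat \<Rightarrow> bool \<Rightarrow> ('k::field) svec set" where
  "homL n m p = (if p then {a \<in> carrierL n m. fst a = (\<lambda>_. 0)}
                 else {a \<in> carrierL n m. snd a = (\<lambda>_. 0)})"

definition y1L :: "('k::field) svec" where
  "y1L = (\<lambda>_. 0, \<lambda>j. if j = 1 then 1 else 0)"

definition linearL :: "nat \<Rightarrow> nat \<Rightarrow> (('k::field) svec \<Rightarrow> 'k svec) \<Rightarrow> bool" where
  "linearL n m D \<longleftrightarrow> (\<forall>a\<in>carrierL n m. D a \<in> carrierL n m) \<and>
     (\<forall>a\<in>carrierL n m. \<forall>b\<in>carrierL n m. D (addL a b) = addL (D a) (D b)) \<and>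
     (\<forall>c. \<forall>a\<in>carrierL n m. D (smulL c a) = smulL c (D a))"

definition superderL :: "nat \<Rightarrow> nat \<Rightarrow> bool \<Rightarrow> (('k::field) svec \<Rightarrow> 'k svec) \<Rightarrow> bool" where
  "superderL n m s D \<longleftrightarrow> linearL n m D \<and>
     (\<forall>p. \<forall>a\<in>homL n m p. D a \<in> homL n m (p \<noteq> s)) \<and>
     (\<forall>p q. \<forall>a\<in>homL n m p. \<forall>b\<in>homL n m q.
        D (brL n m a b) = addL (brL n m (D a) b)
                               (smulL (if s \<and> p then -1 else 1) (brL n m a (D b))))"

end

theory Submission
  imports Defs
begin

text \<open>The super-Leibniz rule differs from the ordinary one only by the sign of
  \<open>[a, D b]\<close> when both \<open>D\<close> and \<open>a\<close> are odd. For odd \<open>a\<close>, \<open>[a, D b] = c \<cdot> [a, x\<^sub>1]\<close>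
  with \<open>c\<close> the \<open>x\<^sub>1\<close>-coordinate of \<open>D b\<close>, and an odd superderivation never produces an
  \<open>x\<^sub>1\<close>-coordinate: for even \<open>b\<close> because \<open>D b\<close> is odd, for odd \<open>b\<close> by comparing
  \<open>x\<^sub>3\<close>-coordinates in \<open>0 = D [b, x\<^sub>2] = [D b, x\<^sub>2] - [b, D x\<^sub>2]\<close>. So the sign is
  irrelevant, and bilinearity extends the rule from homogeneous to arbitrary elements.\<close>

definition evenPartL :: "('k::field) svec \<Rightarrow> 'k svec" where
  "evenPartL a = (fst a, \<lambda>_. 0)"

definition oddPartL :: "('k::field) svec \<Rightarrow> 'k svec" where
  "oddPartL a = (\<lambda>_. 0, snd a)"

lemma homL_subset_carrierL: "homL n m p \<subseteq> carrierL n m"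
  by (auto simp: homL_def)

lemma evenPartL_in_homL: "a \<in> carrierL n m \<Longrightarrow> evenPartL a \<in> homL n m False"
  by (auto simp: evenPartL_def homL_def carrierL_def)

lemma oddPartL_in_homL: "a \<in> carrierL n m \<Longrightarrow> oddPartL a \<in> homL n m True"
  by (auto simp: oddPartL_def homL_def carrierL_def)

lemma addL_evenPartL_oddPartL: "addL (evenPartL a) (oddPartL a) = a"
  by (simp add: evenPartL_def oddPartL_def addL_def)

lemma addL_in_carrierL:
  "a \<in> carrierL n m \<Longrightarrow> b \<in> carrierL n m \<Longrightarrow> addL a b \<in> carrierL n m"
  by (auto simp: carrierL_def addL_def)

lemma brL_in_carrierL: "brL n m a b \<in> carrierL n m"
  by (auto simp: brL_def carrierL_def)

lemma brL_addL_left: "brL n m (addL a b) c = addL (brL n m a c) (brL n m b c)"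
  by (auto simp: brL_def addL_def algebra_simps)

lemma brL_addL_right: "brL n m c (addL a b) = addL (brL n m c a) (brL n m c b)"
  by (auto simp: brL_def addL_def algebra_simps)

lemma addL_swap_middle: "addL (addL a b) (addL c d) = addL (addL a c) (addL b d)"
  by (simp add: addL_def algebra_simps)

lemma linearL_addL:
  "linearL n m D \<Longrightarrow> a \<in> carrierL n m \<Longrightarrow> b \<in> carrierL n m \<Longrightarrow> D (addL a b) = addL (D a) (D b)"
  by (simp add: linearL_def)

lemma linearL_zero:
  assumes "linearL n m D"
  shows "D (\<lambda>_. 0, \<lambda>_. 0) = ((\<lambda>_. 0, \<lambda>_. 0) :: ('k::field) svec)"
proof -
  have "(\<lambda>_. 0, \<lambda>_. 0) \<in> (carrierL n m :: 'k svec set)"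
    by (simp add: carrierL_def)
  then have "D (smulL 0 (\<lambda>_. 0, \<lambda>_. 0)) = smulL 0 (D (\<lambda>_. 0, \<lambda>_. 0))"
    using assms by (simp add: linearL_def)
  then show ?thesis
    by (simp add: smulL_def)
qed

lemma superderL_leibniz_hom:
  "superderL n m s D \<Longrightarrow> a \<in> homL n m p \<Longrightarrow> b \<in> homL n m q \<Longrightarrow>
   D (brL n m a b) = addL (brL n m (D a) b) (smulL (if s \<and> p then -1 else 1) (brL n m a (D b)))"
  unfolding superderL_def by blast

lemma superderL_homL:
  "superderL n m s D \<Longrightarrow> a \<in> homL n m p \<Longrightarrow> D a \<in> homL n m (p \<noteq> s)"
  unfolding superderL_def by blast

lemma odd_superderL_no_x1:
  fixes D :: "('k::field) svec \<Rightarrow> 'k svec"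
  assumes n: "3 \<le> n" and D: "superderL n m True D" and b: "b \<in> homL n m q"
  shows "fst (D b) 1 = 0"
proof (cases q)
  case False
  then have "D b \<in> homL n m True"
    using superderL_homL[OF D b] by simp
  then show ?thesis
    by (simp add: homL_def)
next
  case True
  define x2 :: "'k svec" where "x2 = (\<lambda>i. if i = 2 then 1 else 0, \<lambda>_. 0)"
  have x2: "x2 \<in> homL n m False"
    using n by (auto simp: x2_def homL_def carrierL_def)
  have fst_b: "fst b = (\<lambda>_. 0)"
    using b True by (simp add: homL_def)
  have "fst (D x2) = (\<lambda>_. 0)"
    using superderL_homL[OF D x2] by (simp add: homL_def)
  moreover have "brL n m b x2 = (\<lambda>_. 0, \<lambda>_. 0)"
    using fst_b by (auto simp: brL_def x2_def)
  then have "fst (addL (brL n m (D b) x2) (smulL (-1) (brL n m b (D x2)))) 3 = 0"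
    using superderL_leibniz_hom[OF D b x2] linearL_zero[of n m D] D True
    by (simp add: superderL_def)
  ultimately show ?thesis
    using n fst_b by (simp add: addL_def smulL_def brL_def x2_def)
qed

lemma brL_eq_zero_if_no_x1:
  "fst a = (\<lambda>_. 0) \<Longrightarrow> fst c 1 = 0 \<Longrightarrow> brL n m a c = (\<lambda>_. 0, \<lambda>_. 0)"
  by (auto simp: brL_def)

lemma superderL_derivation_hom:
  fixes D :: "('k::field) svec \<Rightarrow> 'k svec"
  assumes n: "3 \<le> n" and D: "superderL n m s D" and a: "a \<in> homL n m p" and b: "b \<in> homL n m q"
  shows "D (brL n m a b) = addL (brL n m (D a) b) (brL n m a (D b))"
proof (cases "s \<and> p")
  case False
  then have "(if s \<and> p then -1 else 1) = (1::'k)"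
    by auto
  then show ?thesis
    using superderL_leibniz_hom[OF D a b] by (simp add: smulL_def)
next
  case True
  then have "fst a = (\<lambda>_. 0)"
    using a by (simp add: homL_def)
  moreover have "fst (D b) 1 = 0"
    using odd_superderL_no_x1[OF n _ b] D True by simp
  ultimately have "brL n m a (D b) = (\<lambda>_. 0, \<lambda>_. 0)"
    by (rule brL_eq_zero_if_no_x1)
  then show ?thesis
    using superderL_leibniz_hom[OF D a b] by (simp add: smulL_def)
qed

definition leibnizL :: "nat \<Rightarrow> nat \<Rightarrow> (('k::field) svec \<Rightarrow> 'k svec) \<Rightarrow> 'k svec \<Rightarrow> 'k svec \<Rightarrow> bool" where
  "leibnizL n m D a b \<longleftrightarrow> D (brL n m a b) = addL (brL n m (D a) b) (brL n m a (D b))"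

lemma leibnizL_addL_left:
  assumes D: "linearL n m D" and a1: "a1 \<in> carrierL n m" and a2: "a2 \<in> carrierL n m"
    and "leibnizL n m D a1 b" and "leibnizL n m D a2 b"
  shows "leibnizL n m D (addL a1 a2) b"
proof -
  have "D (brL n m (addL a1 a2) b) = addL (D (brL n m a1 b)) (D (brL n m a2 b))"
    using linearL_addL[OF D brL_in_carrierL brL_in_carrierL] by (simp add: brL_addL_left)
  then show ?thesis
    using assms(4,5) linearL_addL[OF D a1 a2]
    by (simp add: leibnizL_def brL_addL_left brL_addL_right addL_swap_middle)
qed

lemma leibnizL_addL_right:
  assumes D: "linearL n m D" and b1: "b1 \<in> carrierL n m" and b2: "b2 \<in> carrierL n m"
    and "leibnizL n m D a b1" and "leibnizL n m D a b2"
  shows "leibnizL n m D a (addL b1 b2)"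
proof -
  have "D (brL n m a (addL b1 b2)) = addL (D (brL n m a b1)) (D (brL n m a b2))"
    using linearL_addL[OF D brL_in_carrierL brL_in_carrierL] by (simp add: brL_addL_right)
  then show ?thesis
    using assms(4,5) linearL_addL[OF D b1 b2]
    by (simp add: leibnizL_def brL_addL_left brL_addL_right addL_swap_middle)
qed

lemma leibnizL_of_homogeneous:
  assumes D: "linearL n m D"
    and hom: "\<And>a b p q. a \<in> homL n m p \<Longrightarrow> b \<in> homL n m q \<Longrightarrow> leibnizL n m D a b"
    and a: "a \<in> carrierL n m" and b: "b \<in> carrierL n m"
  shows "leibnizL n m D a b"
proof -
  have parts: "evenPartL x \<in> carrierL n m" "oddPartL x \<in> carrierL n m" if "x \<in> carrierL n m" for x
    using evenPartL_in_homL[OF that] oddPartL_in_homL[OF that] homL_subset_carrierL by blast+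
  have left_hom: "leibnizL n m D a' b" if "a' \<in> homL n m p" for a' p
    using leibnizL_addL_right[OF D parts[OF b], of a'] hom[OF that]
      evenPartL_in_homL[OF b] oddPartL_in_homL[OF b]
    by (simp add: addL_evenPartL_oddPartL)
  show ?thesis
    using leibnizL_addL_left[OF D parts[OF a], of b]
      left_hom[OF evenPartL_in_homL[OF a]] left_hom[OF oddPartL_in_homL[OF a]]
    by (simp add: addL_evenPartL_oddPartL)
qed

theorem mainTheorem9:
  fixes D :: "('k::field) svec \<Rightarrow> 'k svec" and n m :: nat and s :: bool
  assumes "3 \<le> n" and "1 \<le> m" and "superderL n m s D"
  shows "(\<forall>a\<in>carrierL n m. \<forall>b\<in>carrierL n m.
            D (brL n m a b) = addL (brL n m (D a) b) (brL n m a (D b)))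
         \<and> (s \<longrightarrow> fst (D y1L) 1 = 0)"
proof (intro conjI ballI impI)
  have "linearL n m D"
    using assms(3) by (simp add: superderL_def)
  moreover have "leibnizL n m D a b" if "a \<in> homL n m p" and "b \<in> homL n m q" for a b p q
    using superderL_derivation_hom[OF assms(1,3) that] by (simp add: leibnizL_def)
  ultimately show "D (brL n m a b) = addL (brL n m (D a) b) (brL n m a (D b))"
    if "a \<in> carrierL n m" and "b \<in> carrierL n m" for a b
    using leibnizL_of_homogeneous[OF _ _ that] by (simp add: leibnizL_def)
next
  assume s
  have "y1L \<in> homL n m True"
    using assms(2) by (auto simp: y1L_def homL_def carrierL_def)
  then show "fst (D y1L) 1 = 0"
    using odd_superderL_no_x1[OF assms(1)] assms(3) \<open>s\<close> by simp
qed

end
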